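(* Let $\zeta_5=\exp(2\pi i/5)$, $K=\mathbb{Q}(\zeta_5)\subset\mathbb{C}$, $\mathcal{O}_K=\mathbb{Z}[\zeta_5]$, let $\sigma:K\to\mathbb{C}$ be the embedding with $\sigma(\zeta_5)=\zeta_5^2$, and let $\mathcal{S}=\{z\in\mathcal{O}_K : |\sigma(z)|\le 1\}$. Then for every $z\in\mathcal{S}$, $$\min_{z'\in\mathcal{S}\setminus\{z\}}|z-z'|\le 1.$$
   Context: Elements of $K$ are regarded as complex numbers via the inclusion $K\subset\mathbb{C}$. *)

theory Defs
  imports Complex_Main "HOL-Computational_Algebra.Polynomial"
begin

definition zeta5 :: complex where
  "zeta5 = exp (2 * of_real pi * \<i> / 5)"

definition OK5 :: "complex set" where
  "OK5 = {poly (map_poly of_int p) zeta5 | p :: int poly. True}"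

text \<open>The set S = {z in O_K : |sigma z| <= 1}, where sigma is the embedding with
  sigma(zeta5) = zeta5^2, so sigma(p(zeta5)) = p(zeta5^2) for every integer polynomial p.\<close>
definition S5 :: "complex set" where
  "S5 = {poly (map_poly of_int p) zeta5 | p :: int poly.
           cmod (poly (map_poly of_int p) (zeta5 ^ 2)) \<le> 1}"

end

theory Submission
  imports Defs
begin

text \<open>Some fifth root of unity \<open>\<zeta>^m\<close> lies within angle \<open>\<pi>/5\<close> of \<open>-\<sigma>(z)\<close>, and then
  \<open>|\<sigma>(z) + \<zeta>^m| \<le> 1\<close>. Since \<open>\<sigma>(\<zeta>^(3m)) = \<zeta>^(6m) = \<zeta>^m\<close>, the point \<open>z' = z + \<zeta>^(3m)\<close>
  lies in \<open>S\<close>, differs from \<open>z\<close>, and is at distance \<open>|\<zeta>^(3m)| = 1\<close> from it.\<close>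

lemma norm_one_minus_cis_le_one:
  fixes r a :: real
  assumes "\<bar>a\<bar> \<le> pi/3" "0 \<le> r" "r \<le> 1"
  shows "cmod (1 - of_real r * cis a) \<le> 1"
proof -
  have "cos (pi/3) \<le> cos \<bar>a\<bar>"
    using assms(1) by (intro cos_monotone_0_pi_le) auto
  hence cos_a: "1/2 \<le> cos a" by (simp add: cos_60)
  have "(cmod (1 - of_real r * cis a))\<^sup>2 = (1 - r * cos a)\<^sup>2 + (r * sin a)\<^sup>2"
    by (simp add: cmod_power2)
  also have "\<dots> = 1 - 2 * r * cos a + r\<^sup>2 * ((sin a)\<^sup>2 + (cos a)\<^sup>2)"
    unfolding power2_eq_square by algebra
  also have "\<dots> = 1 - 2 * r * cos a + r\<^sup>2"
    by (simp only: sin_cos_squared_add mult_1_right)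
  also have "\<dots> \<le> 1"
    using mult_left_mono[OF assms(3,2)] mult_left_mono[OF cos_a assms(2)]
    by (simp add: power2_eq_square)
  finally show ?thesis
    by (simp add: power_le_one_iff)
qed

lemma exists_root_of_unity_add_norm_le_one:
  assumes "3 \<le> n" "cmod w \<le> 1"
  shows "\<exists>m::nat. cmod (w + cis (2 * pi * real m / real n)) \<le> 1"
proof -
  define t where "t = (if Arg (-w) < 0 then Arg (-w) + 2 * pi else Arg (-w))"
  have t: "0 \<le> t" "cis t = cis (Arg (-w))"
    using Arg_bounded[of "-w"] by (auto simp: t_def complex_eq_iff)
  define k where "k = round (t * n / (2 * pi))"
  define m where "m = nat k"
  have "0 \<le> k"
    using t(1) by (simp add: k_def round_def)
  hence m: "real m = of_int k"
    by (simp add: m_def)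
  define d where "d = t - 2 * pi * real m / real n"
  have "\<bar>of_int k - t * n / (2 * pi)\<bar> \<le> 1/2"
    unfolding k_def by (rule of_int_round_abs_le)
  hence "\<bar>d\<bar> \<le> pi / real n"
    using assms(1) by (simp add: d_def m abs_le_iff field_simps)
  also have "\<dots> \<le> pi / 3"
    using assms(1) by (intro divide_left_mono) auto
  finally have d: "\<bar>d\<bar> \<le> pi / 3" .
  define r where "r = cmod w"
  have w: "w = - (of_real r * cis t)"
    using rcis_cmod_Arg[of "-w"] t(2) by (simp add: r_def rcis_def)
  have "w + cis (2 * pi * real m / real n)
      = cis (2 * pi * real m / real n) * (1 - of_real r * cis d)"
    unfolding w by (simp add: d_def algebra_simps flip: cis_mult cis_divide)
  hence "cmod (w + cis (2 * pi * real m / real n)) = cmod (1 - of_real r * cis d)"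
    by (simp add: norm_mult)
  also have "\<dots> \<le> 1"
    using norm_one_minus_cis_le_one[OF d] assms(2) by (simp add: r_def)
  finally show ?thesis ..
qed

lemma zeta5_power: "zeta5 ^ m = cis (2 * pi * real m / 5)"
proof -
  have "zeta5 = cis (2 * pi / 5)"
    by (simp add: zeta5_def cis_conv_exp mult.commute)
  hence "zeta5 ^ m = cis (real m * (2 * pi / 5))"
    by (simp only: DeMoivre[symmetric])
  thus ?thesis
    by (simp add: field_simps)
qed

lemma zeta5_power_5: "zeta5 ^ 5 = 1"
  by (simp add: zeta5_power)

lemma norm_zeta5_power [simp]: "cmod (zeta5 ^ m) = 1"
  by (simp add: zeta5_power)

lemma zeta5_square_power_triple: "(zeta5\<^sup>2) ^ (3 * m) = zeta5 ^ m"
proof -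
  have "(zeta5\<^sup>2) ^ (3 * m) = (zeta5 ^ 5) ^ m * zeta5 ^ m"
    by (simp flip: power_mult power_add)
  thus ?thesis
    by (simp add: zeta5_power_5)
qed

lemma poly_of_int_add_monom:
  "poly (map_poly of_int (p + monom 1 n)) x = poly (map_poly of_int p) x + (x :: 'a :: comm_ring_1) ^ n"
proof -
  have "map_poly of_int (p + monom 1 n) = map_poly of_int p + monom (1 :: 'a) n"
    by (rule poly_eqI) (simp add: coeff_map_poly coeff_monom)
  thus ?thesis
    by (simp add: poly_monom)
qed

theorem mainTheorem4:
  assumes "z \<in> S5"
  shows "\<exists>z' \<in> S5 - {z}. cmod (z - z') \<le> 1"
proof -
  obtain p :: "int poly" where z: "z = poly (map_poly of_int p) zeta5"
    and sigma_z: "cmod (poly (map_poly of_int p) (zeta5\<^sup>2)) \<le> 1"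
    using assms by (auto simp: S5_def)
  obtain m where m: "cmod (poly (map_poly of_int p) (zeta5\<^sup>2) + zeta5 ^ m) \<le> 1"
    using exists_root_of_unity_add_norm_le_one[of 5, OF _ sigma_z]
    by (auto simp: zeta5_power)
  define z' where "z' = poly (map_poly of_int (p + monom 1 (3 * m))) zeta5"
  have "cmod (poly (map_poly of_int (p + monom 1 (3 * m))) (zeta5\<^sup>2)) \<le> 1"
    using m by (simp add: poly_of_int_add_monom zeta5_square_power_triple)
  hence "z' \<in> S5"
    by (auto simp: S5_def z'_def)
  moreover have z': "z' = z + zeta5 ^ (3 * m)"
    by (simp add: z z'_def poly_of_int_add_monom)
  hence "z' \<noteq> z"
    using norm_zeta5_power[of "3 * m"] by (metis add_cancel_left_right norm_zero zero_neq_one)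
  moreover have "cmod (z - z') = 1"
    by (simp add: z' norm_minus_commute)
  ultimately show ?thesis
    by force
qed

end
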